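(* Assume (A1) and (A2), and let $\sigma,\sigma'>0$, $\bar Z\in\mathcal{Z}^\sigma_\star$, and $\bar H\in\mathcal{C}(\bar Z)$, with $\bar Z'$ and $\bar H'$ as defined in the context. Then $$\Pi_+'(\bar Z';\bar H')=\Pi_+'(\bar Z;\bar H),\qquad \Pi_-'(\bar Z';\bar H')=\frac{\sigma'}{\sigma}\,\Pi_-'(\bar Z;\bar H).$$
   Context: Notation: $\mathbb{S}^n$ is the space of real symmetric $n\times n$ matrices with $\langle A,B\rangle=\mathrm{tr}(AB)$. $\Pi_+$, $\Pi_-$ are the orthogonal projections onto the PSD and NSD cones, and $F'(Z;H):=\lim_{t\downarrow0}(F(Z+tH)-F(Z))/t$ for $F\in\{\Pi_+,\Pi_-\}$. SDP data $C,A_1,\dots,A_m\in\mathbb{S}^n$, $b\in\mathbb{R}^m$ define $\mathcal{A}X:=(\langle A_i,X\rangle)_i$ and $\mathcal{A}^*y:=\sum_iy_iA_i$. A KKT point is $(X,y,S)$ with $\mathcal{A}X=b$, $\mathcal{A}^*y+S=C$, $X,S\succeq0$, $\langle X,S\rangle=0$. $\mathcal{X}_\star$, $\mathcal{S}_\star$ are the sets of $X$, resp. $S$, in KKT points. (A1) $\mathcal{A}$ is surjective. (A2) Some KKT point $(X_{sc},y_{sc},S_{sc})$ has $\mathrm{rank}X_{sc}+\mathrm{rank}S_{sc}=n$. Let $\mathcal{P}:=\mathcal{A}^*(\mathcal{A}\mathcal{A}^* )^{-1}\mathcal{A}$ and $\mathcal{P}^\perp:=\mathrm{Id}-\mathcal{P}$.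 For $\tau>0$ let $\mathcal{Z}^\tau_\star:=\{X-\tau S:X\in\mathcal{X}_\star,S\in\mathcal{S}_\star\}$. For such $\bar Z$ let $\delta'(\bar Z;H):=-\mathcal{P}\Pi_+'(\bar Z;H)-\mathcal{P}^\perp\Pi_-'(\bar Z;H)$ and $\mathcal{C}(\bar Z):=\{H:\delta'(\bar Z;H)=0\}$. Given $\bar Z\in\mathcal{Z}^\sigma_\star$, let $\bar X:=\Pi_+(\bar Z)$ and $\bar S:=-\sigma^{-1}\Pi_-(\bar Z)$, and define $$\bar Z':=\bar X-\sigma'\bar S,\qquad \bar H':=\Pi_+'(\bar Z;\bar H)+\frac{\sigma'}{\sigma}\Pi_-'(\bar Z;\bar H).$$ *)

theory Defs
  imports "HOL-Analysis.Analysis"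
begin

definition sym_mat :: "real^'n^'n \<Rightarrow> bool" where
  "sym_mat X \<longleftrightarrow> transpose X = X"

definition minner :: "real^'n^'n \<Rightarrow> real^'n^'n \<Rightarrow> real" where
  "minner A B = trace (A ** B)"

definition psd :: "real^'n^'n \<Rightarrow> bool" where
  "psd X \<longleftrightarrow> sym_mat X \<and> (\<forall>v. 0 \<le> v \<bullet> (X *v v))"

definition nsd :: "real^'n^'n \<Rightarrow> bool" where
  "nsd X \<longleftrightarrow> sym_mat X \<and> (\<forall>v. v \<bullet> (X *v v) \<le> 0)"

definition proj_onto :: "(real^'n^'n) set \<Rightarrow> real^'n^'n \<Rightarrow> real^'n^'n" where
  "proj_onto K Z = (THE P. P \<in> K \<and>
      (\<forall>Q\<in>K. minner (Z - P) (Z - P) \<le> minner (Z - Q) (Z - Q)))"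

definition Pi_plus :: "real^'n^'n \<Rightarrow> real^'n^'n" where
  "Pi_plus = proj_onto {X. psd X}"

definition Pi_minus :: "real^'n^'n \<Rightarrow> real^'n^'n" where
  "Pi_minus = proj_onto {X. nsd X}"

definition dir_deriv ::
  "(real^'n^'n \<Rightarrow> real^'n^'n) \<Rightarrow> real^'n^'n \<Rightarrow> real^'n^'n \<Rightarrow> real^'n^'n" where
  "dir_deriv F Z H = (THE D. ((\<lambda>t. (1 / t) *\<^sub>R (F (Z + t *\<^sub>R H) - F Z)) \<longlongrightarrow> D) (at_right 0))"

definition opA :: "('m::finite \<Rightarrow> real^'n^'n) \<Rightarrow> real^'n^'n \<Rightarrow> real^'m" where
  "opA A X = (\<chi> i. minner (A i) X)"

definition adjA :: "('m::finite \<Rightarrow> real^'n^'n) \<Rightarrow> real^'m \<Rightarrow> real^'n^'n" where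
  "adjA A y = (\<Sum>i\<in>UNIV. (y $ i) *\<^sub>R A i)"

definition gramA :: "('m::finite \<Rightarrow> real^'n^'n) \<Rightarrow> real^'m^'m" where
  "gramA A = (\<chi> i j. minner (A i) (A j))"

definition projP :: "('m::finite \<Rightarrow> real^'n^'n) \<Rightarrow> real^'n^'n \<Rightarrow> real^'n^'n" where
  "projP A X = adjA A (matrix_inv (gramA A) *v opA A X)"

definition projPperp :: "('m::finite \<Rightarrow> real^'n^'n) \<Rightarrow> real^'n^'n \<Rightarrow> real^'n^'n" where
  "projPperp A X = X - projP A X"

definition KKT :: "('m::finite \<Rightarrow> real^'n^'n) \<Rightarrow> real^'m \<Rightarrow> real^'n^'n
    \<Rightarrow> real^'n^'n \<Rightarrow> real^'m \<Rightarrow> real^'n^'n \<Rightarrow> bool" where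
  "KKT A b C X y S \<longleftrightarrow> opA A X = b \<and> adjA A y + S = C \<and> psd X \<and> psd S \<and> minner X S = 0"

definition Xstar :: "('m::finite \<Rightarrow> real^'n^'n) \<Rightarrow> real^'m \<Rightarrow> real^'n^'n \<Rightarrow> (real^'n^'n) set" where
  "Xstar A b C = {X. \<exists>y S. KKT A b C X y S}"

definition Sstar :: "('m::finite \<Rightarrow> real^'n^'n) \<Rightarrow> real^'m \<Rightarrow> real^'n^'n \<Rightarrow> (real^'n^'n) set" where
  "Sstar A b C = {S. \<exists>X y. KKT A b C X y S}"

definition Zstar :: "('m::finite \<Rightarrow> real^'n^'n) \<Rightarrow> real^'m \<Rightarrow> real^'n^'n \<Rightarrow> real
    \<Rightarrow> (real^'n^'n) set" where
  "Zstar A b C \<tau> = {X - \<tau> *\<^sub>R S | X S. X \<in> Xstar A b C \<and> S \<in> Sstar A b C}"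

definition delta' :: "('m::finite \<Rightarrow> real^'n^'n) \<Rightarrow> real^'n^'n \<Rightarrow> real^'n^'n \<Rightarrow> real^'n^'n" where
  "delta' A Z H = - projP A (dir_deriv Pi_plus Z H) - projPperp A (dir_deriv Pi_minus Z H)"

definition critcone :: "('m::finite \<Rightarrow> real^'n^'n) \<Rightarrow> real^'n^'n \<Rightarrow> (real^'n^'n) set" where
  "critcone A Z = {H. sym_mat H \<and> delta' A Z H = 0}"

end

theory Submission
  imports Defs
begin

text \<open>For symmetric \<open>Z\<close>, Moreau's decomposition \<open>Z = \<Pi>\<^sub>+ Z + \<Pi>\<^sub>- Z\<close> is the unique splitting of \<open>Z\<close>
  into orthogonal psd and nsd parts; uniqueness rests on Fejer's theorem (psd matrices have
  nonnegative trace inner product). Hence \<open>Z' = \<Pi>\<^sub>+ Z + r \<Pi>\<^sub>- Z\<close> with \<open>r = \<sigma>'/\<sigma>\<close> has the same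
  positive part as \<open>Z\<close>, and likewise \<open>W t = \<Pi>\<^sub>+ (Z + t H) + r \<Pi>\<^sub>- (Z + t H)\<close> has the same
  positive part as \<open>Z + t H\<close>. If \<open>D = \<Pi>\<^sub>+'(Z; H)\<close> exists, then \<open>W t = Z' + t H' + o(t)\<close> with
  \<open>H' = D + r (H - D)\<close>, and as \<open>\<Pi>\<^sub>+\<close> is 1-Lipschitz, \<open>\<Pi>\<^sub>+'(Z'; H') = D\<close>; the claim for \<open>\<Pi>\<^sub>-\<close>
  follows from \<open>\<Pi>\<^sub>- = id - \<Pi>\<^sub>+\<close>. Only the symmetry of \<open>Z\<close> and \<open>H\<close> is used: (A1), (A2) and the
  optimality of \<open>Z\<close> are not needed, and the critical-cone hypothesis serves only to exclude the
  junk value that \<open>dir_deriv\<close> takes when the limit does not exist.\<close>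

section \<open>Symmetric and semidefinite matrices\<close>

lemma sym_mat_iff: "sym_mat X \<longleftrightarrow> (\<forall>i j. X$i$j = X$j$i)"
  unfolding sym_mat_def transpose_def vec_eq_iff by auto

lemma sym_mat_add: "sym_mat A \<Longrightarrow> sym_mat B \<Longrightarrow> sym_mat (A + B)"
  and sym_mat_diff: "sym_mat A \<Longrightarrow> sym_mat B \<Longrightarrow> sym_mat (A - B)"
  and sym_mat_scaleR: "sym_mat A \<Longrightarrow> sym_mat (c *\<^sub>R A)"
  and sym_mat_uminus_iff: "sym_mat (- A) \<longleftrightarrow> sym_mat A"
  by (auto simp: sym_mat_iff)

lemma minner_eq_inner: "sym_mat B \<Longrightarrow> minner A B = inner A B"
  unfolding minner_def trace_def matrix_matrix_mult_def inner_vec_def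
  by (simp add: sym_mat_iff)

lemma quad_form_sum: "(v::real^'n) \<bullet> (A *v v) = (\<Sum>i\<in>UNIV. \<Sum>j\<in>UNIV. v$i * A$i$j * v$j)"
  by (simp add: matrix_vector_mult_def inner_vec_def sum_distrib_left algebra_simps)

lemma quad_form_add: "(v::real^'n) \<bullet> ((A + B) *v v) = v \<bullet> (A *v v) + v \<bullet> (B *v v)"
  by (simp add: matrix_vector_mult_add_rdistrib inner_add_right)

lemma quad_form_scaleR: "(v::real^'n) \<bullet> ((c *\<^sub>R A) *v v) = c * (v \<bullet> (A *v v))"
  by (simp add: scaleR_matrix_vector_assoc[symmetric])

lemma quad_form_uminus: "(v::real^'n) \<bullet> ((- A) *v v) = - (v \<bullet> (A *v v))"
  using quad_form_scaleR[of v "-1" A] by simp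

lemma inner_matrix_vector_sym:
  assumes "sym_mat M" shows "(y::real^'n) \<bullet> (M *v x) = x \<bullet> (M *v y)"
proof -
  have "y \<bullet> (M *v x) = (y v* M) \<bullet> x"
    by (rule dot_lmul_matrix[symmetric])
  also have "y v* M = M *v y"
    using assms transpose_matrix_vector[of M y] by (simp add: sym_mat_def)
  finally show ?thesis
    by (simp add: inner_commute)
qed

lemma quad_form_add_vectors:
  assumes "sym_mat M"
  shows "((x::real^'n) + y) \<bullet> (M *v (x + y)) = x \<bullet> (M *v x) + 2 * (x \<bullet> (M *v y)) + y \<bullet> (M *v y)"
  using inner_matrix_vector_sym[OF assms, of y x]
  by (simp add: matrix_vector_right_distrib inner_add_left inner_add_right)

lemma sym_mat_if_psd: "psd X \<Longrightarrow> sym_mat X"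
  and sym_mat_if_nsd: "nsd X \<Longrightarrow> sym_mat X"
  by (simp_all add: psd_def nsd_def)

lemma psd_add: "psd A \<Longrightarrow> psd B \<Longrightarrow> psd (A + B)"
  unfolding psd_def by (auto simp: sym_mat_add quad_form_add)

lemma psd_scaleR: "psd A \<Longrightarrow> 0 \<le> c \<Longrightarrow> psd (c *\<^sub>R A)"
  unfolding psd_def by (auto simp: sym_mat_scaleR quad_form_scaleR)

lemma nsd_scaleR: "nsd A \<Longrightarrow> 0 \<le> c \<Longrightarrow> nsd (c *\<^sub>R A)"
  unfolding nsd_def by (auto simp: sym_mat_scaleR quad_form_scaleR mult_nonneg_nonpos)

lemma nsd_iff_psd_uminus: "nsd N \<longleftrightarrow> psd (- N)"
  unfolding psd_def nsd_def
  by (simp add: sym_mat_uminus_iff quad_form_uminus)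

lemma psd_zero: "psd 0"
  by (simp add: psd_def sym_mat_iff)

lemma inner_axis_matrix_vector_axis: "axis i 1 \<bullet> (M *v axis j 1) = M$i$j"
  by (simp add: matrix_vector_mult_basis inner_axis' column_def)

lemma psd_diag_nonneg: "psd M \<Longrightarrow> 0 \<le> M$i$i"
  unfolding psd_def using inner_axis_matrix_vector_axis[of i M i] by metis

definition outer :: "real^'n \<Rightarrow> real^'n \<Rightarrow> real^'n^'n" where
  "outer v w = (\<chi> i j. v$i * w$j)"

lemma sym_mat_outer: "sym_mat (outer v v)"
  by (simp add: sym_mat_iff outer_def mult.commute)

lemma quad_form_outer: "(w::real^'n) \<bullet> (outer v v *v w) = (v \<bullet> w)\<^sup>2"
  unfolding quad_form_sum
  by (simp add: outer_def inner_vec_def power2_eq_square sum_product sum_distrib_left algebra_simps)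

lemma psd_outer: "psd (outer v v)"
  by (simp add: psd_def sym_mat_outer quad_form_outer)

lemma inner_outer_eq_quad_form: "inner N (outer v v) = v \<bullet> (N *v v)"
  unfolding quad_form_sum by (simp add: outer_def inner_vec_def algebra_simps)

section \<open>Fejer's theorem\<close>

lemma linear_nonneg_imp_slope_zero:
  assumes "\<And>s::real. 0 \<le> s * m + d" shows "m = 0"
proof (rule ccontr)
  assume "m \<noteq> 0"
  have "0 \<le> (- (d + 1) / m) * m + d" by (rule assms)
  also have "\<dots> = -1" using \<open>m \<noteq> 0\<close> by simp
  finally show False by simp
qed

lemma psd_row_eq_zero_if_diag_eq_zero:
  assumes psd: "psd M" and diag: "M$i$i = 0"
  shows "M$i$k = 0"
proof (rule linear_nonneg_imp_slope_zero)
  fix s :: real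
  have sym: "sym_mat M" and quad: "\<And>v. 0 \<le> v \<bullet> (M *v v)"
    using psd by (auto simp: psd_def)
  have "0 \<le> ((s / 2) *\<^sub>R axis i 1 + axis k 1) \<bullet> (M *v ((s / 2) *\<^sub>R axis i 1 + axis k 1))"
    by (rule quad)
  also have "\<dots> = s * M$i$k + M$k$k"
    unfolding quad_form_add_vectors[OF sym]
    by (simp add: matrix_vector_mult_scaleR inner_axis_matrix_vector_axis diag)
  finally show "0 \<le> s * M$i$k + M$k$k" .
qed

lemma psd_rank_one_deflation:
  fixes M :: "real^'n^'n"
  assumes psd: "psd M" and pos: "0 < M$i$i"
  shows "psd (M - (1 / M$i$i) *\<^sub>R outer (column i M) (column i M))"
    (is "psd (M - ?a *\<^sub>R outer ?c ?c)")
proof -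
  have sym: "sym_mat M" and quad: "\<And>v. 0 \<le> v \<bullet> (M *v v)"
    using psd by (auto simp: psd_def)
  have c: "axis i 1 \<bullet> (M *v v) = ?c \<bullet> v" for v
    using inner_matrix_vector_sym[OF sym, of "axis i 1" v]
    by (simp add: matrix_vector_mult_basis inner_commute)
  have "0 \<le> v \<bullet> ((M - ?a *\<^sub>R outer ?c ?c) *v v)" for v
  proof -
    \<comment> \<open>completing the square in the \<open>i\<close>-th coordinate\<close>
    define s where "s = - (?c \<bullet> v) / M$i$i"
    have "0 \<le> (v + s *\<^sub>R axis i 1) \<bullet> (M *v (v + s *\<^sub>R axis i 1))"
      by (rule quad)
    also have "\<dots> = v \<bullet> (M *v v) + 2 * s * (?c \<bullet> v) + s\<^sup>2 * M$i$i"
      unfolding quad_form_add_vectors[OF sym]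
      using c[of v] inner_matrix_vector_sym[OF sym, of v "axis i 1"]
      by (simp add: matrix_vector_mult_scaleR matrix_vector_mult_basis inner_axis' column_def
          power2_eq_square)
    also have "\<dots> = v \<bullet> ((M - ?a *\<^sub>R outer ?c ?c) *v v)"
      using pos by (simp add: s_def matrix_vector_mult_diff_rdistrib inner_diff_right
          quad_form_scaleR quad_form_outer inner_commute field_simps power2_eq_square)
    finally show ?thesis .
  qed
  moreover have "sym_mat (M - ?a *\<^sub>R outer ?c ?c)"
    by (intro sym_mat_diff sym_mat_scaleR sym sym_mat_outer)
  ultimately show ?thesis by (simp add: psd_def)
qed

text \<open>Induction on the set of rows supporting \<open>M\<close>: a rank-one deflation removes one row, and the
  removed term pairs nonnegatively with any psd matrix.\<close>

lemma inner_psd_nonneg_supported: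
  fixes Q M :: "real^'n^'n"
  assumes "psd Q" and "finite I" and "psd M" and "\<And>j k. j \<notin> I \<Longrightarrow> M$j$k = 0"
  shows "0 \<le> inner Q M"
  using assms(2-4)
proof (induction I arbitrary: M rule: finite_induct)
  case empty
  then have "M = 0" by (simp add: vec_eq_iff)
  then show ?case by simp
next
  case (insert i I)
  show ?case
  proof (cases "M$i$i = 0")
    case True
    then have "M$i$k = 0" for k
      using psd_row_eq_zero_if_diag_eq_zero[OF insert.prems(1)] by blast
    then have "M$j$k = 0" if "j \<notin> I" for j k
      using that insert.prems(2)[of j k] by (cases "j = i") auto
    then show ?thesis
      using insert.IH insert.prems(1) by blast
  next
    case False
    define c where "c = column i M"
    define M' where "M' = M - (1 / M$i$i) *\<^sub>R outer c c"
    have pos: "0 < M$i$i"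
      using False psd_diag_nonneg[OF insert.prems(1), of i] by simp
    have sym: "M$k$j = M$j$k" for j k
      using insert.prems(1) by (simp add: psd_def sym_mat_iff)
    have "0 \<le> inner Q M'"
    proof (rule insert.IH)
      show "psd M'"
        unfolding M'_def c_def by (rule psd_rank_one_deflation[OF insert.prems(1) pos])
      show "M'$j$k = 0" if "j \<notin> I" for j k
        using that pos insert.prems(2)[of j k] insert.prems(2)[of j i]
        by (cases "j = i") (auto simp: M'_def outer_def c_def column_def sym)
    qed
    moreover have "0 \<le> inner Q (outer c c)"
      using \<open>psd Q\<close> by (simp add: inner_commute inner_outer_eq_quad_form psd_def)
    moreover have "inner Q M = inner Q M' + (1 / M$i$i) * inner Q (outer c c)"
      by (simp add: M'_def inner_diff_right)
    ultimately show ?thesis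
      using pos by simp
  qed
qed

lemma inner_psd_nonneg: "psd Q \<Longrightarrow> psd M \<Longrightarrow> 0 \<le> inner Q (M::real^'n^'n)"
  using inner_psd_nonneg_supported[of Q UNIV M] by simp

section \<open>Projections onto the semidefinite cones\<close>

lemma closest_point_eqI:
  fixes S :: "'a::{real_inner,heine_borel} set"
  assumes "convex S" "closed S" "p \<in> S" and obtuse: "\<And>q. q \<in> S \<Longrightarrow> inner (a - p) (q - p) \<le> 0"
  shows "closest_point S a = p"
proof (rule closest_point_unique[symmetric, OF assms(1-3)], intro ballI)
  fix q assume "q \<in> S"
  have "(dist a q)\<^sup>2 = (dist a p)\<^sup>2 + (dist p q)\<^sup>2 - 2 * inner (a - p) (q - p)"
    by (simp add: dist_norm power2_norm_eq_inner inner_diff_left inner_diff_right inner_commute)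
  then have "(dist a p)\<^sup>2 \<le> (dist a q)\<^sup>2"
    using obtuse[OF \<open>q \<in> S\<close>] zero_le_power2[of "dist p q"] by linarith
  then show "dist a p \<le> dist a q"
    by (simp add: power2_le_iff_abs_le)
qed

lemma proj_onto_eq_closest_point:
  fixes K :: "(real^'n^'n) set"
  assumes "convex K" "closed K" "K \<noteq> {}" and sym_K: "\<And>Q. Q \<in> K \<Longrightarrow> sym_mat Q"
    and "sym_mat Z"
  shows "proj_onto K Z = closest_point K Z"
proof -
  have dist_sq: "minner (Z - Q) (Z - Q) = (dist Z Q)\<^sup>2" if "Q \<in> K" for Q
    using sym_K[OF that] \<open>sym_mat Z\<close>
    by (simp add: minner_eq_inner sym_mat_diff dist_norm power2_norm_eq_inner)
  have minimal_iff: "(\<forall>Q\<in>K. minner (Z - P) (Z - P) \<le> minner (Z - Q) (Z - Q))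
      \<longleftrightarrow> (\<forall>Q\<in>K. dist Z P \<le> dist Z Q)" if "P \<in> K" for P
    using that by (simp add: dist_sq power2_le_iff_abs_le)
  show ?thesis
    unfolding proj_onto_def
  proof (rule the_equality)
    show "closest_point K Z \<in> K \<and> (\<forall>Q\<in>K. minner (Z - closest_point K Z) (Z - closest_point K Z)
        \<le> minner (Z - Q) (Z - Q))"
      using closest_point_exists[OF assms(2,3)] minimal_iff by blast
  next
    fix P assume "P \<in> K \<and> (\<forall>Q\<in>K. minner (Z - P) (Z - P) \<le> minner (Z - Q) (Z - Q))"
    then show "P = closest_point K Z"
      using closest_point_unique[OF assms(1,2)] minimal_iff by blast
  qed
qed

lemma convex_psd: "convex {X::real^'n^'n. psd X}"
  by (rule convexI) (simp add: psd_add psd_scaleR)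

lemma closed_psd: "closed {X::real^'n^'n. psd X}"
proof -
  have "{X::real^'n^'n. psd X} = (\<Inter>i. \<Inter>j. {X. X$i$j = X$j$i})
      \<inter> (\<Inter>v. {X. 0 \<le> (\<Sum>i\<in>UNIV. \<Sum>j\<in>UNIV. v$i * X$i$j * v$j)})"
    by (auto simp: psd_def sym_mat_iff quad_form_sum)
  also have "closed \<dots>"
    by (intro closed_Int closed_INT ballI closed_Collect_eq closed_Collect_le continuous_intros)
  finally show ?thesis .
qed

lemma nsd_set_eq_uminus_psd: "{X::real^'n^'n. nsd X} = uminus ` {X. psd X}"
  by (force simp: nsd_iff_psd_uminus)

lemma convex_nsd: "convex {X::real^'n^'n. nsd X}"
  unfolding nsd_set_eq_uminus_psd by (rule convex_negations[OF convex_psd])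

lemma closed_nsd: "closed {X::real^'n^'n. nsd X}"
  unfolding nsd_set_eq_uminus_psd by (rule closed_negations[OF closed_psd])

lemma Pi_plus_eq_closest_point: "sym_mat Z \<Longrightarrow> Pi_plus Z = closest_point {X. psd X} Z"
  unfolding Pi_plus_def
  by (rule proj_onto_eq_closest_point)
    (auto simp: convex_psd closed_psd sym_mat_if_psd intro!: exI[of _ 0] psd_zero)

lemma Pi_minus_eq_closest_point: "sym_mat Z \<Longrightarrow> Pi_minus Z = closest_point {X. nsd X} Z"
  unfolding Pi_minus_def
  by (rule proj_onto_eq_closest_point)
    (auto simp: convex_nsd closed_nsd sym_mat_if_nsd nsd_iff_psd_uminus intro!: exI[of _ 0] psd_zero)

lemma Pi_plus_Pi_minus_eqI:
  fixes Z :: "real^'n^'n"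
  assumes "sym_mat Z" "psd P" "nsd N" "Z = P + N" "inner P N = 0"
  shows "Pi_plus Z = P" "Pi_minus Z = N"
proof -
  show "Pi_plus Z = P"
    unfolding Pi_plus_eq_closest_point[OF \<open>sym_mat Z\<close>]
  proof (rule closest_point_eqI[OF convex_psd closed_psd])
    fix Q :: "real^'n^'n" assume "Q \<in> {X. psd X}"
    then have "0 \<le> inner Q (- N)"
      using assms(3) by (intro inner_psd_nonneg) (simp_all add: nsd_iff_psd_uminus)
    then show "inner (Z - P) (Q - P) \<le> 0"
      using assms(4,5) by (simp add: inner_diff_right inner_commute)
  qed (use assms in simp)
  show "Pi_minus Z = N"
    unfolding Pi_minus_eq_closest_point[OF \<open>sym_mat Z\<close>]
  proof (rule closest_point_eqI[OF convex_nsd closed_nsd])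
    fix Q :: "real^'n^'n" assume "Q \<in> {X. nsd X}"
    then have "0 \<le> inner (- Q) P"
      using assms(2) by (intro inner_psd_nonneg) (simp_all add: nsd_iff_psd_uminus)
    then show "inner (Z - N) (Q - N) \<le> 0"
      using assms(4,5) by (simp add: inner_diff_right inner_commute)
  qed (use assms in simp)
qed

lemma Moreau_decomposition:
  fixes W :: "real^'n^'n"
  assumes "sym_mat W"
  shows "psd (Pi_plus W)" "nsd (Pi_minus W)" "Pi_plus W + Pi_minus W = W"
    "inner (Pi_plus W) (Pi_minus W) = 0"
proof -
  define P where "P = Pi_plus W"
  define N where "N = W - P"
  have P: "P = closest_point {X. psd X} W"
    using Pi_plus_eq_closest_point[OF assms] by (simp add: P_def)
  have "{X::real^'n^'n. psd X} \<noteq> {}"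
    using psd_zero by blast
  then have psd_P: "psd P"
    using closest_point_in_set[OF closed_psd] P by blast
  have obtuse: "inner N (Q - P) \<le> 0" if "psd Q" for Q
    using closest_point_dot[OF convex_psd closed_psd, of Q W] that by (simp add: P N_def)
  have N_dual: "inner Q N \<le> 0" if "psd Q" for Q
    using obtuse[OF psd_add[OF psd_P that]] by (simp add: inner_commute)
  have orth: "inner P N = 0"
    using obtuse[OF psd_zero] obtuse[OF psd_scaleR[OF psd_P, of 2]]
    by (simp add: inner_commute algebra_simps)
  have "v \<bullet> (N *v v) \<le> 0" for v
    using N_dual[OF psd_outer, of v] by (simp add: inner_commute inner_outer_eq_quad_form)
  then have "nsd N"
    using assms psd_P by (simp add: nsd_def N_def sym_mat_if_psd sym_mat_diff)
  have N: "Pi_minus W = N"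
    by (rule Pi_plus_Pi_minus_eqI(2)[OF assms psd_P \<open>nsd N\<close> _ orth]) (simp add: N_def)
  show "psd (Pi_plus W)" "nsd (Pi_minus W)" "Pi_plus W + Pi_minus W = W"
    "inner (Pi_plus W) (Pi_minus W) = 0"
    using psd_P \<open>nsd N\<close> orth unfolding N P_def[symmetric] by (simp_all add: N_def)
qed

lemma lipschitz_Pi_plus: "1-lipschitz_on {X::real^'n^'n. sym_mat X} Pi_plus"
  by (rule lipschitz_onI)
    (auto simp: Pi_plus_eq_closest_point intro!: closest_point_lipschitz convex_psd closed_psd psd_zero)

lemma Pi_plus_Pi_minus_rescale:
  fixes V :: "real^'n^'n"
  assumes "sym_mat V" "0 \<le> r"
  shows "Pi_plus (Pi_plus V + r *\<^sub>R Pi_minus V) = Pi_plus V"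
    "Pi_minus (Pi_plus V + r *\<^sub>R Pi_minus V) = r *\<^sub>R Pi_minus V"
proof -
  note Moreau = Moreau_decomposition[OF assms(1)]
  have "sym_mat (Pi_plus V + r *\<^sub>R Pi_minus V)"
    using Moreau by (auto simp: psd_def nsd_def intro: sym_mat_add sym_mat_scaleR)
  from Pi_plus_Pi_minus_eqI[OF this Moreau(1) nsd_scaleR[OF Moreau(2) assms(2)]]
  show "Pi_plus (Pi_plus V + r *\<^sub>R Pi_minus V) = Pi_plus V"
    "Pi_minus (Pi_plus V + r *\<^sub>R Pi_minus V) = r *\<^sub>R Pi_minus V"
    using Moreau(4) by simp_all
qed

section \<open>Directional derivatives of the projections\<close>

lemma closed_sym_mat: "closed {X::real^'n^'n. sym_mat X}"
proof -
  have "{X::real^'n^'n. sym_mat X} = (\<Inter>i. \<Inter>j. {X. X$i$j = X$j$i})"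
    by (auto simp: sym_mat_iff)
  also have "closed \<dots>"
    by (intro closed_INT ballI closed_Collect_eq continuous_intros)
  finally show ?thesis .
qed

definition has_dir_deriv ::
    "('a::real_normed_vector \<Rightarrow> 'b::real_normed_vector) \<Rightarrow> 'a \<Rightarrow> 'a \<Rightarrow> 'b \<Rightarrow> bool" where
  "has_dir_deriv F Z H D \<longleftrightarrow> ((\<lambda>t. (1 / t) *\<^sub>R (F (Z + t *\<^sub>R H) - F Z)) \<longlongrightarrow> D) (at_right 0)"

lemma dir_deriv_eqI: "has_dir_deriv F Z H D \<Longrightarrow> dir_deriv F Z H = D"
  unfolding dir_deriv_def has_dir_deriv_def
  by (rule the_equality) (auto intro: tendsto_unique[OF trivial_limit_at_right_real])

lemma dir_deriv_undefined: "\<nexists>D. has_dir_deriv F Z H D \<Longrightarrow> dir_deriv F Z H = (THE D. False)"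
  unfolding dir_deriv_def has_dir_deriv_def by (intro arg_cong[where f = The]) auto

lemma has_dir_deriv_zero_direction: "has_dir_deriv F Z 0 0"
  by (simp add: has_dir_deriv_def)

lemma has_dir_deriv_complement:
  fixes F G :: "'a::real_normed_vector \<Rightarrow> 'a"
  assumes sum: "\<And>t. F (Z + t *\<^sub>R H) + G (Z + t *\<^sub>R H) = Z + t *\<^sub>R H"
    and "has_dir_deriv F Z H D"
  shows "has_dir_deriv G Z H (H - D)"
proof -
  have quotient: "(1 / t) *\<^sub>R (G (Z + t *\<^sub>R H) - G Z) = H - (1 / t) *\<^sub>R (F (Z + t *\<^sub>R H) - F Z)"
    if "t \<noteq> 0" for t
  proof -
    have "G (Z + t *\<^sub>R H) - G Z = t *\<^sub>R H - (F (Z + t *\<^sub>R H) - F Z)"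
      using sum[of t] sum[of 0] by (simp add: algebra_simps)
    then show ?thesis
      using that by (simp add: scaleR_diff_right)
  qed
  have "\<forall>\<^sub>F t in at_right 0. H - (1 / t) *\<^sub>R (F (Z + t *\<^sub>R H) - F Z)
      = (1 / t) *\<^sub>R (G (Z + t *\<^sub>R H) - G Z)"
    by (rule eventually_mono[OF eventually_at_right_less]) (simp add: quotient)
  moreover have "((\<lambda>t. H - (1 / t) *\<^sub>R (F (Z + t *\<^sub>R H) - F Z)) \<longlongrightarrow> H - D) (at_right 0)"
    using \<open>has_dir_deriv F Z H D\<close> unfolding has_dir_deriv_def by (intro tendsto_intros)
  ultimately show ?thesis
    unfolding has_dir_deriv_def by (rule Lim_transform_eventually[rotated])
qed

lemma has_dir_deriv_add_scaleR:
  assumes "has_dir_deriv F Z H D" and "has_dir_deriv G Z H E"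
  shows "has_dir_deriv (\<lambda>V. F V + c *\<^sub>R G V) Z H (D + c *\<^sub>R E)"
proof -
  have quotient: "(1 / t) *\<^sub>R ((F (Z + t *\<^sub>R H) + c *\<^sub>R G (Z + t *\<^sub>R H)) - (F Z + c *\<^sub>R G Z))
      = (1 / t) *\<^sub>R (F (Z + t *\<^sub>R H) - F Z) + c *\<^sub>R ((1 / t) *\<^sub>R (G (Z + t *\<^sub>R H) - G Z))" for t
    by (simp add: algebra_simps)
  show ?thesis
    using assms unfolding has_dir_deriv_def quotient by (intro tendsto_intros)
qed

lemma has_dir_deriv_lipschitz_transfer:
  fixes F :: "'a::real_normed_vector \<Rightarrow> 'b::real_normed_vector"
  assumes lip: "L-lipschitz_on K F"
    and ray: "\<And>t. 0 < t \<Longrightarrow> Z + t *\<^sub>R H \<in> K" and curve: "\<And>t. 0 < t \<Longrightarrow> W t \<in> K"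
    and curve_deriv: "((\<lambda>t. (1 / t) *\<^sub>R (W t - Z)) \<longlongrightarrow> H) (at_right 0)"
    and deriv: "((\<lambda>t. (1 / t) *\<^sub>R (F (W t) - F Z)) \<longlongrightarrow> D) (at_right 0)"
  shows "has_dir_deriv F Z H D"
proof -
  have "\<forall>\<^sub>F t in at_right 0. (1 / t) *\<^sub>R (W t - Z) - H = (1 / t) *\<^sub>R (W t - (Z + t *\<^sub>R H))"
    by (rule eventually_mono[OF eventually_at_right_less]) (simp add: algebra_simps)
  moreover have "((\<lambda>t. (1 / t) *\<^sub>R (W t - Z) - H) \<longlongrightarrow> 0) (at_right 0)"
    using tendsto_diff[OF curve_deriv tendsto_const[of H]] by simp
  ultimately have tangent: "((\<lambda>t. (1 / t) *\<^sub>R (W t - (Z + t *\<^sub>R H))) \<longlongrightarrow> 0) (at_right 0)"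
    by (rule Lim_transform_eventually[rotated])
  have bound: "norm ((1 / t) *\<^sub>R (F (Z + t *\<^sub>R H) - F Z) - (1 / t) *\<^sub>R (F (W t) - F Z))
      \<le> L * norm ((1 / t) *\<^sub>R (W t - (Z + t *\<^sub>R H)))" if "0 < t" for t
  proof -
    have "norm (F (Z + t *\<^sub>R H) - F (W t)) \<le> L * norm (W t - (Z + t *\<^sub>R H))"
      using lipschitz_on_normD[OF lip ray[OF that] curve[OF that]] by (simp add: norm_minus_commute)
    then show ?thesis
      using that by (simp add: scaleR_diff_right[symmetric] divide_right_mono)
  qed
  have "\<forall>\<^sub>F t in at_right 0. norm ((1 / t) *\<^sub>R (F (Z + t *\<^sub>R H) - F Z) - (1 / t) *\<^sub>R (F (W t) - F Z))
      \<le> L * norm ((1 / t) *\<^sub>R (W t - (Z + t *\<^sub>R H)))"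
    by (rule eventually_mono[OF eventually_at_right_less]) (rule bound)
  moreover have "((\<lambda>t. L * norm ((1 / t) *\<^sub>R (W t - (Z + t *\<^sub>R H)))) \<longlongrightarrow> 0) (at_right 0)"
    using tendsto_mult_right_zero[OF tendsto_norm_zero[OF tangent]] by simp
  ultimately have "((\<lambda>t. (1 / t) *\<^sub>R (F (Z + t *\<^sub>R H) - F Z) - (1 / t) *\<^sub>R (F (W t) - F Z))
      \<longlongrightarrow> 0) (at_right 0)"
    by (rule Lim_null_comparison)
  from tendsto_add[OF this deriv] show ?thesis
    by (simp add: has_dir_deriv_def)
qed

lemma sym_mat_if_has_dir_deriv_Pi_plus:
  fixes Z H :: "real^'n^'n"
  assumes "sym_mat Z" "sym_mat H" and "has_dir_deriv Pi_plus Z H D"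
  shows "sym_mat D"
proof -
  have "sym_mat ((1 / t) *\<^sub>R (Pi_plus (Z + t *\<^sub>R H) - Pi_plus Z))" for t
    using assms Moreau_decomposition(1)[of Z] Moreau_decomposition(1)[of "Z + t *\<^sub>R H"]
    by (intro sym_mat_scaleR sym_mat_diff sym_mat_if_psd) (simp_all add: sym_mat_add sym_mat_scaleR)
  then have "D \<in> {X. sym_mat X}"
    using assms(3) unfolding has_dir_deriv_def
    by (intro Lim_in_closed_set[OF closed_sym_mat _ trivial_limit_at_right_real]) simp_all
  then show ?thesis
    by simp
qed

lemma has_dir_deriv_Pi_minus_iff:
  fixes Z H :: "real^'n^'n"
  assumes "sym_mat Z" "sym_mat H"
  shows "has_dir_deriv Pi_minus Z H E \<longleftrightarrow> has_dir_deriv Pi_plus Z H (H - E)"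
proof -
  have sum: "Pi_plus (Z + t *\<^sub>R H) + Pi_minus (Z + t *\<^sub>R H) = Z + t *\<^sub>R H" for t
    using assms by (intro Moreau_decomposition(3) sym_mat_add sym_mat_scaleR)
  show ?thesis
  proof
    assume "has_dir_deriv Pi_minus Z H E"
    then show "has_dir_deriv Pi_plus Z H (H - E)"
      by (rule has_dir_deriv_complement[rotated]) (subst add.commute, rule sum)
  next
    assume "has_dir_deriv Pi_plus Z H (H - E)"
    from has_dir_deriv_complement[OF sum this] show "has_dir_deriv Pi_minus Z H E"
      by simp
  qed
qed

lemma has_dir_deriv_Pi_rescaled:
  fixes Z H :: "real^'n^'n"
  assumes sym_Z: "sym_mat Z" and sym_H: "sym_mat H" and "0 \<le> r"
    and D: "has_dir_deriv Pi_plus Z H D"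
  shows "has_dir_deriv Pi_plus (Pi_plus Z + r *\<^sub>R Pi_minus Z) (D + r *\<^sub>R (H - D)) D"
    and "has_dir_deriv Pi_minus (Pi_plus Z + r *\<^sub>R Pi_minus Z) (D + r *\<^sub>R (H - D)) (r *\<^sub>R (H - D))"
proof -
  define W where "W t = Pi_plus (Z + t *\<^sub>R H) + r *\<^sub>R Pi_minus (Z + t *\<^sub>R H)" for t
  define H' where "H' = D + r *\<^sub>R (H - D)"
  have sym_ray: "sym_mat (Z + t *\<^sub>R H)" for t
    using sym_Z sym_H by (intro sym_mat_add sym_mat_scaleR)
  have sym_W: "sym_mat (W t)" for t
    unfolding W_def using Moreau_decomposition(1,2)[OF sym_ray]
    by (intro sym_mat_add sym_mat_scaleR sym_mat_if_psd sym_mat_if_nsd)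
  have sym_H': "sym_mat H'"
    using sym_mat_if_has_dir_deriv_Pi_plus[OF sym_Z sym_H D] sym_H
    by (simp add: H'_def sym_mat_add sym_mat_diff sym_mat_scaleR)
  have "has_dir_deriv Pi_minus Z H (H - D)"
    using D by (simp add: has_dir_deriv_Pi_minus_iff[OF sym_Z sym_H])
  from has_dir_deriv_add_scaleR[OF D this, of r]
  have W_deriv: "((\<lambda>t. (1 / t) *\<^sub>R (W t - W 0)) \<longlongrightarrow> H') (at_right 0)"
    by (simp add: has_dir_deriv_def W_def H'_def)
  have "Pi_plus (W t) = Pi_plus (Z + t *\<^sub>R H)" for t
    unfolding W_def by (rule Pi_plus_Pi_minus_rescale(1)[OF sym_ray \<open>0 \<le> r\<close>])
  then have plus: "has_dir_deriv Pi_plus (W 0) H' D"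
    using D sym_W sym_H'
    by (intro has_dir_deriv_lipschitz_transfer[OF lipschitz_Pi_plus _ _ W_deriv])
      (auto simp: has_dir_deriv_def intro: sym_mat_add sym_mat_scaleR)
  moreover have "H' - r *\<^sub>R (H - D) = D"
    by (simp add: H'_def)
  ultimately have minus: "has_dir_deriv Pi_minus (W 0) H' (r *\<^sub>R (H - D))"
    using has_dir_deriv_Pi_minus_iff[OF sym_W[of 0] sym_H'] by simp
  have "W 0 = Pi_plus Z + r *\<^sub>R Pi_minus Z"
    by (simp add: W_def)
  with plus minus
  show "has_dir_deriv Pi_plus (Pi_plus Z + r *\<^sub>R Pi_minus Z) (D + r *\<^sub>R (H - D)) D"
    and "has_dir_deriv Pi_minus (Pi_plus Z + r *\<^sub>R Pi_minus Z) (D + r *\<^sub>R (H - D)) (r *\<^sub>R (H - D))"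
    by (simp_all add: H'_def)
qed

lemma dir_deriv_Pi_rescaled:
  fixes Z H :: "real^'n^'n"
  assumes "sym_mat Z" "sym_mat H" "0 \<le> r" and "has_dir_deriv Pi_plus Z H D"
  defines "Z' \<equiv> Pi_plus Z + r *\<^sub>R Pi_minus Z"
    and "H' \<equiv> dir_deriv Pi_plus Z H + r *\<^sub>R dir_deriv Pi_minus Z H"
  shows "dir_deriv Pi_plus Z' H' = dir_deriv Pi_plus Z H"
    and "dir_deriv Pi_minus Z' H' = r *\<^sub>R dir_deriv Pi_minus Z H"
proof -
  have "dir_deriv Pi_plus Z H = D" "dir_deriv Pi_minus Z H = H - D"
    using assms(4) has_dir_deriv_Pi_minus_iff[OF assms(1,2), of "H - D"]
    by (simp_all add: dir_deriv_eqI)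
  with has_dir_deriv_Pi_rescaled[OF assms(1-4)]
  show "dir_deriv Pi_plus Z' H' = dir_deriv Pi_plus Z H"
    and "dir_deriv Pi_minus Z' H' = r *\<^sub>R dir_deriv Pi_minus Z H"
    by (simp_all add: Z'_def H'_def dir_deriv_eqI)
qed

lemma dir_deriv_Pi_undefined:
  fixes Z H :: "real^'n^'n"
  assumes "sym_mat Z" "sym_mat H" and "\<nexists>D. has_dir_deriv Pi_plus Z H D"
  shows "dir_deriv Pi_minus Z H = dir_deriv Pi_plus Z H"
    and "delta' A Z H = - dir_deriv Pi_plus Z H"
proof -
  have "\<nexists>E. has_dir_deriv Pi_minus Z H E"
    using assms by (auto simp: has_dir_deriv_Pi_minus_iff)
  with assms(3) show "dir_deriv Pi_minus Z H = dir_deriv Pi_plus Z H"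
    by (simp add: dir_deriv_undefined)
  then show "delta' A Z H = - dir_deriv Pi_plus Z H"
    by (simp add: delta'_def projPperp_def)
qed

lemma sym_mat_if_Zstar:
  assumes "Z \<in> Zstar A b C \<tau>"
  shows "sym_mat Z"
proof -
  obtain X S where "Z = X - \<tau> *\<^sub>R S" "X \<in> Xstar A b C" "S \<in> Sstar A b C"
    using assms unfolding Zstar_def by blast
  moreover from this have "psd X" "psd S"
    by (auto simp: Xstar_def Sstar_def KKT_def)
  ultimately show ?thesis
    by (simp add: sym_mat_diff sym_mat_scaleR sym_mat_if_psd)
qed

theorem lemma9p1:
  fixes A :: "'m::finite \<Rightarrow> real^'n^'n" and b :: "real^'m" and C :: "real^'n^'n"
    and \<sigma> \<sigma>' :: real and Zb Hb :: "real^'n^'n"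
  assumes symA: "\<forall>i. sym_mat (A i)" and symC: "sym_mat C"
    and A1: "\<forall>v. \<exists>X. sym_mat X \<and> opA A X = v"
    and A2: "\<exists>X y S. KKT A b C X y S \<and> rank X + rank S = CARD('n)"
    and sig: "\<sigma> > 0" and sig': "\<sigma>' > 0"
    and Z: "Zb \<in> Zstar A b C \<sigma>"
    and H: "Hb \<in> critcone A Zb"
  shows "let Xb = Pi_plus Zb; Sb = - (1 / \<sigma>) *\<^sub>R Pi_minus Zb;
             Zb' = Xb - \<sigma>' *\<^sub>R Sb;
             Hb' = dir_deriv Pi_plus Zb Hb + (\<sigma>' / \<sigma>) *\<^sub>R dir_deriv Pi_minus Zb Hb
         in dir_deriv Pi_plus Zb' Hb' = dir_deriv Pi_plus Zb Hb
          \<and> dir_deriv Pi_minus Zb' Hb' = (\<sigma>' / \<sigma>) *\<^sub>R dir_deriv Pi_minus Zb Hb"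
proof -
  define r where "r = \<sigma>' / \<sigma>"
  have "0 \<le> r"
    using sig sig' by (simp add: r_def)
  have sym_Z: "sym_mat Zb"
    using Z by (rule sym_mat_if_Zstar)
  have sym_H: "sym_mat Hb" and delta: "delta' A Zb Hb = 0"
    using H by (auto simp: critcone_def)
  define Dp Dm where "Dp = dir_deriv Pi_plus Zb Hb" and "Dm = dir_deriv Pi_minus Zb Hb"
  have "dir_deriv Pi_plus (Pi_plus Zb + r *\<^sub>R Pi_minus Zb) (Dp + r *\<^sub>R Dm) = Dp
      \<and> dir_deriv Pi_minus (Pi_plus Zb + r *\<^sub>R Pi_minus Zb) (Dp + r *\<^sub>R Dm) = r *\<^sub>R Dm"
  proof (cases "\<exists>D. has_dir_deriv Pi_plus Zb Hb D")
    case True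
    then show ?thesis
      using dir_deriv_Pi_rescaled[OF sym_Z sym_H \<open>0 \<le> r\<close>] by (auto simp: Dp_def Dm_def)
  next
    case False
    have "Dm = Dp" "delta' A Zb Hb = - Dp"
      using dir_deriv_Pi_undefined[OF sym_Z sym_H False] by (simp_all add: Dp_def Dm_def)
    with delta show ?thesis
      by (simp add: dir_deriv_eqI[OF has_dir_deriv_zero_direction])
  qed
  then show ?thesis
    using sig by (simp add: Let_def Dp_def Dm_def r_def)
qed

end
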